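(* Let $(H,v)$ be a rooted graph. Then for any integers $k\ge 0$ and $g\ge 2$, \[ X_{P^k(C_g,\,H)}=(g-1)X_{H^{k+g-1}}-\sum_{l=1}^{g-2}X_{C_{g-l}}\,X_{H^{k+l-1}}. \]
   Context: All graphs are finite simple graphs. The chromatic symmetric function of a graph $G$ is $X_G=\sum_{\kappa}\prod_{v\in V(G)}x_{\kappa(v)}$, where $\kappa$ ranges over proper colorings $\kappa:V(G)\to\{1,2,\dots\}$. $C_g$ is the cycle on $g$ vertices for $g\ge 3$, and $C_2:=K_2$; cycles are rooted at any vertex. For rooted graphs $(G,u)$, $(H,v)$ and $k\ge 0$, $P^k(G,H)$ is obtained from the disjoint union of $G$ and $H$ by adding a path of length $k$ (with $k-1$ new internal vertices) joining $u$ and $v$ (for $k=0$, $u$ and $v$ are identified). The tailed graph $H^k$ is $P^k(H,K_1)$, i.e., $H$ with a pendant path of length $k$ attached at its root. *)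

theory Defs
  imports Complex_Main "HOL-Library.FuncSet"
begin

type_synonym 'a graph = "'a set \<times> 'a set set"

definition verts :: "'a graph \<Rightarrow> 'a set" where "verts G = fst G"
definition edges :: "'a graph \<Rightarrow> 'a set set" where "edges G = snd G"

definition simple_graph :: "'a graph \<Rightarrow> bool" where
  "simple_graph G \<longleftrightarrow> finite (verts G) \<and>
     (\<forall>e\<in>edges G. \<exists>a b. a \<noteq> b \<and> a \<in> verts G \<and> b \<in> verts G \<and> e = {a, b})"

definition proper_colorings :: "'a graph \<Rightarrow> nat \<Rightarrow> ('a \<Rightarrow> nat) set" where
  "proper_colorings G n =
     {\<kappa> \<in> verts G \<rightarrow>\<^sub>E {..<n}. \<forall>a b. {a, b} \<in> edges G \<longrightarrow> a \<noteq> b \<longrightarrow> \<kappa> a \<noteq> \<kappa> b}"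

text \<open>The chromatic symmetric function X_G, specialised to the first n variables
  x 0, ..., x (n-1) (all other variables set to 0). Two symmetric functions are equal
  iff all these specialisations agree for all n and all real arguments.\<close>
definition CSF :: "'a graph \<Rightarrow> nat \<Rightarrow> (nat \<Rightarrow> real) \<Rightarrow> real" where
  "CSF G n x = (\<Sum>\<kappa>\<in>proper_colorings G n. \<Prod>v\<in>verts G. x (\<kappa> v))"

text \<open>Cycle C_g on vertices 0..g-1 (rooted at 0); for g = 2 this is K_2.\<close>
definition cycle_graph :: "nat \<Rightarrow> nat graph" where
  "cycle_graph g = ({..<g}, {{i, (i + 1) mod g} | i. i < g})"

definition K1 :: "nat graph" where "K1 = ({0}, {})"

text \<open>P^k(G,H) for rooted graphs (G,u), (H,w): disjoint union plus a path of length k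
  from u to w (for k = 0, u and w are identified).  Vertices of G are Inl (Inl a)
  (except u when k = 0, which becomes Inl (Inr w)), vertices of H are Inl (Inr b),
  and the internal path vertices are Inr 1, ..., Inr (k-1).\<close>
definition Pk_vG :: "nat \<Rightarrow> 'a \<Rightarrow> 'b \<Rightarrow> 'a \<Rightarrow> ('a + 'b) + nat" where
  "Pk_vG k u w a = (if k = 0 \<and> a = u then Inl (Inr w) else Inl (Inl a))"

definition Pk_path :: "nat \<Rightarrow> 'a \<Rightarrow> 'b \<Rightarrow> nat \<Rightarrow> ('a + 'b) + nat" where
  "Pk_path k u w i = (if i = 0 then Pk_vG k u w u else if i < k then Inr i else Inl (Inr w))"

definition Pk :: "nat \<Rightarrow> 'a graph \<Rightarrow> 'a \<Rightarrow> 'b graph \<Rightarrow> 'b \<Rightarrow> (('a + 'b) + nat) graph" where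
  "Pk k G u H w =
    (Pk_vG k u w ` verts G \<union> (\<lambda>b. Inl (Inr b)) ` verts H \<union> Inr ` {1..<k},
     {{Pk_vG k u w a, Pk_vG k u w a'} | a a'. {a, a'} \<in> edges G} \<union>
     {{Inl (Inr b), Inl (Inr b')} | b b'. {b, b'} \<in> edges H} \<union>
     {{Pk_path k u w i, Pk_path k u w (i + 1)} | i. i < k})"

definition tailed :: "'b graph \<Rightarrow> 'b \<Rightarrow> nat \<Rightarrow> (('b + nat) + nat) graph" where
  "tailed H w k = Pk k H w K1 0"

end

(*
  Transfer matrices on the colours.  Let A be the n x n matrix with A c d = x d for c ~= d and
  A c c = 0, let W_k = A^k (walk_sum) and let P_j be the row sums of W_j (walk_sum_from).  For a
  rooted graph write r_G c for the weighted count of proper colourings giving the root colour c,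
  the root itself carrying weight 1 (rooted_csf).  Gluing at cut vertices gives
      X_{P^k(G,H)} = Sum_{c,d} x_c r_G(c) W_k(c,d) r_H(d),
  a bilinear form in (r_G, r_H) which is symmetric because x_c W_k(c,d) = x_d W_k(d,c); the tail
  H^m is the pairing of r_H with the all-ones vector at length m, and W_k P_j = P_(k+j).
  For the cycle, r_{C_(g+1)} = P_g - x r_{C_g} and X_{C_g} = Sum_a x_a r_{C_g}(a); since also
  P_(j+1) = (Sum_a x_a P_j(a)) - x P_j, induction on g gives
      r_{C_g} = (g-1) P_(g-1) - Sum_{l=1}^{g-2} X_{C_(g-l)} P_(l-1),
  and substituting this into the bilinear form yields the identity.
*)

theory Submission
  imports Defs "HOL-Library.Indicator_Function"
begin

lemma verts_pair [simp]: "verts (V, E) = V"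
  by (simp add: verts_def)

lemma edges_pair [simp]: "edges (V, E) = E"
  by (simp add: edges_def)

lemma verts_edges_eq [simp]: "(verts G, edges G) = G"
  by (simp add: verts_def edges_def)

lemma simple_graph_finite: "simple_graph G \<Longrightarrow> finite (verts G)"
  by (simp add: simple_graph_def)

lemma simple_graph_edges: "simple_graph G \<Longrightarrow> \<forall>e\<in>edges G. \<exists>a b. a \<in> verts G \<and> b \<in> verts G \<and> e = {a, b}"
  unfolding simple_graph_def by blast

lemma simple_graph_edges_subset: "simple_graph G \<Longrightarrow> \<forall>e\<in>edges G. e \<subseteq> verts G"
  unfolding simple_graph_def by auto

lemma doubletons_image:
  assumes "\<forall>e\<in>E. \<exists>a b. e = {a, b}"
  shows "{{f a, f a'} | a a'. {a, a'} \<in> E} = (`) f ` E"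
proof (intro set_eqI iffI)
  fix s assume "s \<in> {{f a, f a'} | a a'. {a, a'} \<in> E}"
  then obtain a a' where "{a, a'} \<in> E" "s = f ` {a, a'}" by auto
  then show "s \<in> (`) f ` E" by blast
next
  fix s assume "s \<in> (`) f ` E"
  then obtain e where e: "e \<in> E" "s = f ` e" by auto
  moreover obtain a b where "e = {a, b}" using assms e(1) by blast
  ultimately show "s \<in> {{f a, f a'} | a a'. {a, a'} \<in> E}" by auto
qed

lemma image_edges_subset: "\<forall>e\<in>E. e \<subseteq> V \<Longrightarrow> \<forall>e\<in>(`) f ` E. e \<subseteq> f ` V"
  by blast

lemma Un_edges_subset: "\<forall>e\<in>E1. e \<subseteq> V1 \<Longrightarrow> \<forall>e\<in>E2. e \<subseteq> V2 \<Longrightarrow> \<forall>e\<in>E1 \<union> E2. e \<subseteq> V1 \<union> V2"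
  by blast

lemma finite_proper_colorings: "finite (verts G) \<Longrightarrow> finite (proper_colorings G n)"
  unfolding proper_colorings_def
  by (rule finite_subset[of _ "verts G \<rightarrow>\<^sub>E {..<n}"]) (auto intro: finite_PiE)

lemma proper_coloring_less:
  "\<kappa> \<in> proper_colorings G n \<Longrightarrow> a \<in> verts G \<Longrightarrow> \<kappa> a < n"
  by (auto simp: proper_colorings_def PiE_iff)

lemma proper_coloring_extensional:
  "\<kappa> \<in> proper_colorings G n \<Longrightarrow> \<kappa> \<in> extensional (verts G)"
  by (simp add: proper_colorings_def PiE_def)

lemma proper_coloring_neq:
  "\<kappa> \<in> proper_colorings G n \<Longrightarrow> {a, b} \<in> edges G \<Longrightarrow> a \<noteq> b \<Longrightarrow> \<kappa> a \<noteq> \<kappa> b"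
  by (simp add: proper_colorings_def)

lemma proper_coloringsI:
  assumes "\<And>a. a \<in> verts G \<Longrightarrow> \<kappa> a < n" "\<kappa> \<in> extensional (verts G)"
    and "\<And>a b. {a, b} \<in> edges G \<Longrightarrow> a \<noteq> b \<Longrightarrow> \<kappa> a \<noteq> \<kappa> b"
  shows "\<kappa> \<in> proper_colorings G n"
  using assms by (auto simp: proper_colorings_def PiE_iff)

lemma proper_colorings_insert_edge:
  "proper_colorings (V, insert {a, b} E) n = {\<kappa> \<in> proper_colorings (V, E) n. a \<noteq> b \<longrightarrow> \<kappa> a \<noteq> \<kappa> b}"
  unfolding proper_colorings_def by (auto simp: doubleton_eq_iff)

lemma proper_coloring_restrict:
  assumes "\<kappa> \<in> proper_colorings (V, E) n" "V' \<subseteq> V" "E' \<subseteq> E" "\<forall>e\<in>E'. e \<subseteq> V'"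
  shows "restrict \<kappa> V' \<in> proper_colorings (V', E') n"
proof (rule proper_coloringsI)
  fix a b assume "{a, b} \<in> edges (V', E')" "a \<noteq> b"
  with assms show "restrict \<kappa> V' a \<noteq> restrict \<kappa> V' b"
    using proper_coloring_neq[OF assms(1)] by auto
qed (use assms proper_coloring_less[OF assms(1)] in auto)

lemma proper_coloring_glue:
  assumes \<kappa>1: "\<kappa>1 \<in> proper_colorings (V1, E1) n" and \<kappa>2: "\<kappa>2 \<in> proper_colorings (V2, E2) n"
    and agree: "\<kappa>1 z = \<kappa>2 z" and int: "V1 \<inter> V2 = {z}"
    and E1: "\<forall>e\<in>E1. e \<subseteq> V1" and E2: "\<forall>e\<in>E2. e \<subseteq> V2"
  shows "(\<lambda>a. if a \<in> V1 then \<kappa>1 a else \<kappa>2 a) \<in> proper_colorings (V1 \<union> V2, E1 \<union> E2) n"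
proof (rule proper_coloringsI)
  show "(if a \<in> V1 then \<kappa>1 a else \<kappa>2 a) < n" if "a \<in> verts (V1 \<union> V2, E1 \<union> E2)" for a
    using that proper_coloring_less[OF \<kappa>1] proper_coloring_less[OF \<kappa>2] by auto
  show "(\<lambda>a. if a \<in> V1 then \<kappa>1 a else \<kappa>2 a) \<in> extensional (verts (V1 \<union> V2, E1 \<union> E2))"
    using proper_coloring_extensional[OF \<kappa>2] by (auto simp: extensional_def)
  fix a b assume ab: "{a, b} \<in> edges (V1 \<union> V2, E1 \<union> E2)" "a \<noteq> b"
  then consider "{a, b} \<in> E1" | "{a, b} \<in> E2" "a \<in> V2" "b \<in> V2" using E2 by auto
  then show "(if a \<in> V1 then \<kappa>1 a else \<kappa>2 a) \<noteq> (if b \<in> V1 then \<kappa>1 b else \<kappa>2 b)"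
  proof cases
    case 1
    then have "a \<in> V1" "b \<in> V1" using E1 by auto
    then show ?thesis using 1 ab(2) proper_coloring_neq[OF \<kappa>1] by auto
  next
    case 2
    then have "(if a \<in> V1 then \<kappa>1 a else \<kappa>2 a) = \<kappa>2 a" "(if b \<in> V1 then \<kappa>1 b else \<kappa>2 b) = \<kappa>2 b"
      using int agree by auto
    then show ?thesis using 2 ab(2) proper_coloring_neq[OF \<kappa>2] by simp
  qed
qed

lemma bij_betw_proper_colorings_image:
  assumes inj: "inj_on h V" and E: "\<forall>e\<in>E. \<exists>a b. a \<in> V \<and> b \<in> V \<and> e = {a, b}"
  shows "bij_betw (\<lambda>\<kappa>. restrict (\<kappa> \<circ> h) V)
           (proper_colorings (h ` V, (`) h ` E) n) (proper_colorings (V, E) n)"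
proof (rule bij_betw_byWitness[where f' = "\<lambda>\<kappa>. restrict (\<kappa> \<circ> inv_into V h) (h ` V)"])
  show "\<forall>\<kappa>\<in>proper_colorings (h ` V, (`) h ` E) n.
          restrict (restrict (\<kappa> \<circ> h) V \<circ> inv_into V h) (h ` V) = \<kappa>"
    using inj by (force simp: fun_eq_iff extensional_def dest!: proper_coloring_extensional)
  show "\<forall>\<kappa>\<in>proper_colorings (V, E) n. restrict (restrict (\<kappa> \<circ> inv_into V h) (h ` V) \<circ> h) V = \<kappa>"
    using inj by (force simp: fun_eq_iff extensional_def dest!: proper_coloring_extensional)
  show "(\<lambda>\<kappa>. restrict (\<kappa> \<circ> h) V) ` proper_colorings (h ` V, (`) h ` E) n \<subseteq> proper_colorings (V, E) n"
  proof (intro image_subsetI proper_coloringsI)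
    fix \<kappa> a b assume \<kappa>: "\<kappa> \<in> proper_colorings (h ` V, (`) h ` E) n"
    show "restrict (\<kappa> \<circ> h) V a < n" if "a \<in> verts (V, E)"
      using that proper_coloring_less[OF \<kappa>] by simp
    assume ab: "{a, b} \<in> edges (V, E)" "a \<noteq> b"
    then have "a \<in> V" "b \<in> V" using E by (fastforce simp: doubleton_eq_iff)+
    moreover have "h ` {a, b} \<in> (`) h ` E" using ab(1) by (intro imageI) simp
    moreover have "h a \<noteq> h b" using ab inj \<open>a \<in> V\<close> \<open>b \<in> V\<close> by (auto dest: inj_onD)
    ultimately show "restrict (\<kappa> \<circ> h) V a \<noteq> restrict (\<kappa> \<circ> h) V b"
      using proper_coloring_neq[OF \<kappa>] by simp
  qed simp
  show "(\<lambda>\<kappa>. restrict (\<kappa> \<circ> inv_into V h) (h ` V)) ` proper_colorings (V, E) n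
          \<subseteq> proper_colorings (h ` V, (`) h ` E) n"
  proof (intro image_subsetI proper_coloringsI)
    fix \<kappa> a' b' assume \<kappa>: "\<kappa> \<in> proper_colorings (V, E) n"
    show "restrict (\<kappa> \<circ> inv_into V h) (h ` V) a' < n" if "a' \<in> verts (h ` V, (`) h ` E)"
      using that proper_coloring_less[OF \<kappa>] inj by auto
    assume ab: "{a', b'} \<in> edges (h ` V, (`) h ` E)" "a' \<noteq> b'"
    then obtain a b where ab': "a \<in> V" "b \<in> V" "{a, b} \<in> E" "{a', b'} = {h a, h b}"
      using E by force
    moreover have "a \<noteq> b" using ab(2) ab'(4) by auto
    ultimately have "\<kappa> a \<noteq> \<kappa> b" using proper_coloring_neq[OF \<kappa>] by simp
    moreover from ab'(4) have "a' = h a \<and> b' = h b \<or> a' = h b \<and> b' = h a"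
      by (auto simp: doubleton_eq_iff)
    ultimately show "restrict (\<kappa> \<circ> inv_into V h) (h ` V) a' \<noteq> restrict (\<kappa> \<circ> inv_into V h) (h ` V) b'"
      using ab'(1,2) inj by (elim disjE) simp_all
  qed simp
qed

lemma bij_betw_proper_colorings_Un:
  assumes int: "V1 \<inter> V2 = {z}" and E1: "\<forall>e\<in>E1. e \<subseteq> V1" and E2: "\<forall>e\<in>E2. e \<subseteq> V2"
  shows "bij_betw (\<lambda>\<kappa>. (restrict \<kappa> V1, restrict \<kappa> V2)) (proper_colorings (V1 \<union> V2, E1 \<union> E2) n)
           {(\<kappa>1, \<kappa>2) \<in> proper_colorings (V1, E1) n \<times> proper_colorings (V2, E2) n. \<kappa>1 z = \<kappa>2 z}"
proof (rule bij_betw_byWitness[where f' = "\<lambda>(\<kappa>1, \<kappa>2) a. if a \<in> V1 then \<kappa>1 a else \<kappa>2 a"])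
  show "\<forall>\<kappa>\<in>proper_colorings (V1 \<union> V2, E1 \<union> E2) n.
          (case (restrict \<kappa> V1, restrict \<kappa> V2) of (\<kappa>1, \<kappa>2) \<Rightarrow> \<lambda>a. if a \<in> V1 then \<kappa>1 a else \<kappa>2 a) = \<kappa>"
    by (force simp: fun_eq_iff extensional_def dest!: proper_coloring_extensional)
  show "\<forall>p\<in>{(\<kappa>1, \<kappa>2) \<in> proper_colorings (V1, E1) n \<times> proper_colorings (V2, E2) n. \<kappa>1 z = \<kappa>2 z}.
          (\<lambda>\<kappa>. (restrict \<kappa> V1, restrict \<kappa> V2))
            (case p of (\<kappa>1, \<kappa>2) \<Rightarrow> \<lambda>a. if a \<in> V1 then \<kappa>1 a else \<kappa>2 a) = p"
    using int by (force simp: fun_eq_iff extensional_def dest!: proper_coloring_extensional)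
  show "(\<lambda>\<kappa>. (restrict \<kappa> V1, restrict \<kappa> V2)) ` proper_colorings (V1 \<union> V2, E1 \<union> E2) n
          \<subseteq> {(\<kappa>1, \<kappa>2) \<in> proper_colorings (V1, E1) n \<times> proper_colorings (V2, E2) n. \<kappa>1 z = \<kappa>2 z}"
    using int E1 E2 by (auto intro!: proper_coloring_restrict)
  show "(\<lambda>(\<kappa>1, \<kappa>2) a. if a \<in> V1 then \<kappa>1 a else \<kappa>2 a) `
          {(\<kappa>1, \<kappa>2) \<in> proper_colorings (V1, E1) n \<times> proper_colorings (V2, E2) n. \<kappa>1 z = \<kappa>2 z}
          \<subseteq> proper_colorings (V1 \<union> V2, E1 \<union> E2) n"
    using proper_coloring_glue[OF _ _ _ int E1 E2] by auto
qed

definition weighted_csf :: "'v graph \<Rightarrow> nat \<Rightarrow> ('v \<Rightarrow> nat \<Rightarrow> real) \<Rightarrow> real" where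
  "weighted_csf G n f = (\<Sum>\<kappa>\<in>proper_colorings G n. \<Prod>a\<in>verts G. f a (\<kappa> a))"

lemma CSF_eq_weighted_csf: "CSF G n x = weighted_csf G n (\<lambda>_. x)"
  by (simp add: CSF_def weighted_csf_def)

lemma weighted_csf_cong:
  "(\<And>a. a \<in> verts G \<Longrightarrow> f a = f' a) \<Longrightarrow> weighted_csf G n f = weighted_csf G n f'"
  unfolding weighted_csf_def by (intro sum.cong prod.cong refl) auto

lemma weighted_csf_image:
  assumes "inj_on h V" "\<forall>e\<in>E. \<exists>a b. a \<in> V \<and> b \<in> V \<and> e = {a, b}"
  shows "weighted_csf (h ` V, (`) h ` E) n f = weighted_csf (V, E) n (\<lambda>a. f (h a))"
proof -
  have "weighted_csf (h ` V, (`) h ` E) n f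
      = (\<Sum>\<kappa>\<in>proper_colorings (h ` V, (`) h ` E) n. \<Prod>a\<in>V. f (h a) (restrict (\<kappa> \<circ> h) V a))"
    unfolding weighted_csf_def using assms(1) by (simp add: prod.reindex)
  also have "\<dots> = weighted_csf (V, E) n (\<lambda>a. f (h a))"
    unfolding weighted_csf_def verts_pair
    by (rule sum.reindex_bij_betw[OF bij_betw_proper_colorings_image[OF assms]])
  finally show ?thesis .
qed

lemma prod_fun_upd_remove:
  assumes "finite V" "z \<in> V"
  shows "(\<Prod>a\<in>V. (f(z := \<phi>)) a (\<kappa> a)) = \<phi> (\<kappa> z) * (\<Prod>a\<in>V - {z}. f a (\<kappa> a))"
  using assms by (simp add: prod.remove)

lemma weighted_csf_fun_upd:
  assumes fin: "finite (verts G)" and u: "u \<in> verts G"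
  shows "weighted_csf G n (f(u := \<phi>)) = (\<Sum>c<n. \<phi> c * weighted_csf G n (f(u := indicator {c})))"
proof -
  let ?Q = "\<lambda>\<kappa>. \<Prod>a\<in>verts G - {u}. f a (\<kappa> a)"
  have "(\<Sum>c<n. \<phi> c * weighted_csf G n (f(u := indicator {c})))
      = (\<Sum>c<n. \<Sum>\<kappa>\<in>proper_colorings G n. if \<kappa> u = c then \<phi> c * ?Q \<kappa> else 0)"
    unfolding weighted_csf_def prod_fun_upd_remove[OF fin u] sum_distrib_left
    by (intro sum.cong refl) (simp add: indicator_def)
  also have "\<dots> = (\<Sum>\<kappa>\<in>proper_colorings G n. \<phi> (\<kappa> u) * ?Q \<kappa>)"
    by (subst sum.swap) (simp add: proper_coloring_less[OF _ u])
  also have "\<dots> = weighted_csf G n (f(u := \<phi>))"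
    unfolding weighted_csf_def prod_fun_upd_remove[OF fin u] ..
  finally show ?thesis ..
qed

lemma weighted_csf_glue_pinned:
  assumes fin1: "finite V1" and fin2: "finite V2" and int: "V1 \<inter> V2 = {z}"
    and E1: "\<forall>e\<in>E1. e \<subseteq> V1" and E2: "\<forall>e\<in>E2. e \<subseteq> V2"
    and pin: "g z = indicator {c}"
  shows "weighted_csf (V1 \<union> V2, E1 \<union> E2) n g = weighted_csf (V1, E1) n g * weighted_csf (V2, E2) n g"
proof -
  let ?P1 = "proper_colorings (V1, E1) n" and ?P2 = "proper_colorings (V2, E2) n"
  let ?pairs = "{(\<kappa>1, \<kappa>2) \<in> ?P1 \<times> ?P2. \<kappa>1 z = \<kappa>2 z}"
  let ?F = "\<lambda>(\<kappa>1, \<kappa>2). (\<Prod>a\<in>V1. g a (\<kappa>1 a)) * (\<Prod>a\<in>V2 - {z}. g a (\<kappa>2 a))"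
  have z: "z \<in> V1" "z \<in> V2" using int by auto
  have fin: "finite ?P1" "finite ?P2" using fin1 fin2 by (auto intro: finite_proper_colorings)
  have "weighted_csf (V1 \<union> V2, E1 \<union> E2) n g
      = (\<Sum>\<kappa>\<in>proper_colorings (V1 \<union> V2, E1 \<union> E2) n. ?F (restrict \<kappa> V1, restrict \<kappa> V2))"
  proof -
    have "V1 \<union> V2 = V1 \<union> (V2 - {z})" "V1 \<inter> (V2 - {z}) = {}" using int by auto
    then have "(\<Prod>a\<in>V1 \<union> V2. g a (\<kappa> a)) = ?F (restrict \<kappa> V1, restrict \<kappa> V2)" for \<kappa>
      using fin1 fin2 by (simp add: prod.union_disjoint)
    then show ?thesis unfolding weighted_csf_def by simp
  qed
  also have "\<dots> = (\<Sum>p\<in>?pairs. ?F p)"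
    by (rule sum.reindex_bij_betw[OF bij_betw_proper_colorings_Un[OF int E1 E2]])
  also have "\<dots> = (\<Sum>p\<in>?P1 \<times> ?P2. if fst p z = snd p z then ?F p else 0)"
    unfolding sum.inter_filter[OF finite_cartesian_product[OF fin], symmetric]
    by (rule sum.cong) auto
  also have "\<dots> = (\<Sum>\<kappa>1\<in>?P1. \<Sum>\<kappa>2\<in>?P2. if \<kappa>1 z = \<kappa>2 z then ?F (\<kappa>1, \<kappa>2) else 0)"
    unfolding sum.cartesian_product by (rule sum.cong) auto
  also have "\<dots> = (\<Sum>\<kappa>1\<in>?P1. \<Sum>\<kappa>2\<in>?P2. (\<Prod>a\<in>V1. g a (\<kappa>1 a)) * (\<Prod>a\<in>V2. g a (\<kappa>2 a)))"
  proof (intro sum.cong refl)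
    fix \<kappa>1 \<kappa>2
    \<comment> \<open>both products carry the factor \<open>indicator {c}\<close> at \<open>z\<close>, so only pairs agreeing at \<open>z\<close> count\<close>
    have "(\<Prod>a\<in>V1. g a (\<kappa>1 a)) = indicator {c} (\<kappa>1 z) * (\<Prod>a\<in>V1 - {z}. g a (\<kappa>1 a))"
         "(\<Prod>a\<in>V2. g a (\<kappa>2 a)) = indicator {c} (\<kappa>2 z) * (\<Prod>a\<in>V2 - {z}. g a (\<kappa>2 a))"
      by (simp_all add: prod.remove[OF fin1 z(1)] prod.remove[OF fin2 z(2)] pin)
    then show "(if \<kappa>1 z = \<kappa>2 z then ?F (\<kappa>1, \<kappa>2) else 0) = (\<Prod>a\<in>V1. g a (\<kappa>1 a)) * (\<Prod>a\<in>V2. g a (\<kappa>2 a))"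
      by (simp add: indicator_def)
  qed
  also have "\<dots> = weighted_csf (V1, E1) n g * weighted_csf (V2, E2) n g"
    unfolding weighted_csf_def by (simp add: sum_product)
  finally show ?thesis .
qed

lemma weighted_csf_glue:
  assumes fin1: "finite V1" and fin2: "finite V2" and int: "V1 \<inter> V2 = {z}"
    and E1: "\<forall>e\<in>E1. e \<subseteq> V1" and E2: "\<forall>e\<in>E2. e \<subseteq> V2"
  shows "weighted_csf (V1 \<union> V2, E1 \<union> E2) n f =
    (\<Sum>c<n. f z c * weighted_csf (V1, E1) n (f(z := indicator {c}))
                 * weighted_csf (V2, E2) n (f(z := indicator {c})))"
proof -
  have "z \<in> verts (V1 \<union> V2, E1 \<union> E2)" "finite (verts (V1 \<union> V2, E1 \<union> E2))"
    using int fin1 fin2 by auto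
  from weighted_csf_fun_upd[OF this(2,1), of n f "f z"]
  show ?thesis
    by (simp add: weighted_csf_glue_pinned[OF assms] mult.assoc)
qed

definition rooted_csf :: "'v graph \<Rightarrow> 'v \<Rightarrow> nat \<Rightarrow> (nat \<Rightarrow> real) \<Rightarrow> nat \<Rightarrow> real" where
  "rooted_csf G u n x c = weighted_csf G n ((\<lambda>_. x)(u := indicator {c}))"

lemma CSF_eq_sum_rooted_csf:
  assumes "finite (verts G)" "u \<in> verts G"
  shows "CSF G n x = (\<Sum>c<n. x c * rooted_csf G u n x c)"
proof -
  have "(\<lambda>_. x)(u := x) = (\<lambda>_. x)" by auto
  then show ?thesis
    using weighted_csf_fun_upd[OF assms, of n "\<lambda>_. x" x]
    by (simp add: CSF_eq_weighted_csf rooted_csf_def)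
qed

definition walks :: "nat \<Rightarrow> nat \<Rightarrow> (nat \<Rightarrow> nat) set" where
  "walks n k = {p \<in> {..k} \<rightarrow>\<^sub>E {..<n}. \<forall>i<k. p i \<noteq> p (Suc i)}"

definition walk_sum :: "nat \<Rightarrow> (nat \<Rightarrow> real) \<Rightarrow> nat \<Rightarrow> nat \<Rightarrow> nat \<Rightarrow> real" where
  "walk_sum n x k c d = (\<Sum>p\<in>{p \<in> walks n k. p 0 = c \<and> p k = d}. \<Prod>i\<in>{1..k}. x (p i))"

definition walk_sum_from :: "nat \<Rightarrow> (nat \<Rightarrow> real) \<Rightarrow> nat \<Rightarrow> nat \<Rightarrow> real" where
  "walk_sum_from n x k c = (\<Sum>d<n. walk_sum n x k c d)"

lemma finite_walks [simp]: "finite (walks n k)"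
  unfolding walks_def by (rule finite_subset[of _ "{..k} \<rightarrow>\<^sub>E {..<n}"]) (auto intro: finite_PiE)

lemma walks_less: "p \<in> walks n k \<Longrightarrow> i \<le> k \<Longrightarrow> p i < n"
  unfolding walks_def by (auto simp: PiE_iff)

lemma walks_0: "walks n 0 = {..0} \<rightarrow>\<^sub>E {..<n}"
  by (simp add: walks_def)

lemma walk_sum_eq_0: "n \<le> c \<or> n \<le> d \<Longrightarrow> walk_sum n x k c d = 0"
proof -
  assume "n \<le> c \<or> n \<le> d"
  then have "{p \<in> walks n k. p 0 = c \<and> p k = d} = {}"
    using walks_less[of _ n k 0] walks_less[of _ n k k] by fastforce
  then show ?thesis unfolding walk_sum_def by (simp only: sum.empty)
qed

lemma walk_sum_from_eq: "walk_sum_from n x k c = (\<Sum>p\<in>{p \<in> walks n k. p 0 = c}. \<Prod>i\<in>{1..k}. x (p i))"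
proof -
  have "(\<Sum>p\<in>{p \<in> walks n k. p 0 = c}. \<Prod>i\<in>{1..k}. x (p i)) =
        (\<Sum>d<n. \<Sum>p\<in>{p \<in> {p \<in> walks n k. p 0 = c}. p k = d}. \<Prod>i\<in>{1..k}. x (p i))"
    by (rule sum.group[symmetric]) (auto simp: walks_less)
  also have "\<dots> = walk_sum_from n x k c"
    unfolding walk_sum_from_def walk_sum_def by (rule sum.cong[OF refl], rule sum.cong) auto
  finally show ?thesis by simp
qed

lemma walk_sum_from_minus_walk_sum:
  "walk_sum_from n x k c - walk_sum n x k c d
     = (\<Sum>p\<in>{p \<in> walks n k. p 0 = c \<and> p k \<noteq> d}. \<Prod>i\<in>{1..k}. x (p i))"
proof -
  have "{p \<in> walks n k. p 0 = c} = {p \<in> walks n k. p 0 = c \<and> p k \<noteq> d} \<union> {p \<in> walks n k. p 0 = c \<and> p k = d}"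
    by auto
  then show ?thesis
    unfolding walk_sum_from_eq walk_sum_def by (simp add: sum.union_disjoint disjoint_iff)
qed

lemma walk_sum_0: "walk_sum n x 0 c d = (if c = d \<and> d < n then 1 else 0)"
proof -
  have "{p \<in> walks n 0. p 0 = c \<and> p 0 = d} = (if c = d \<and> d < n then {(\<lambda>_. undefined)(0 := d)} else {})"
    by (auto simp: walks_0 PiE_iff extensional_def fun_eq_iff)
  then show ?thesis unfolding walk_sum_def by simp
qed

lemma walk_sum_from_0: "c < n \<Longrightarrow> walk_sum_from n x 0 c = 1"
  unfolding walk_sum_from_def walk_sum_0 by simp

lemma walk_sum_Suc:
  assumes d: "d < n"
  shows "walk_sum n x (Suc k) c d = (walk_sum_from n x k c - walk_sum n x k c d) * x d"
proof -
  let ?S = "{p \<in> walks n (Suc k). p 0 = c \<and> p (Suc k) = d}"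
  let ?T = "{p \<in> walks n k. p 0 = c \<and> p k \<noteq> d}"
  have "bij_betw (\<lambda>p. restrict p {..k}) ?S ?T"
  proof (rule bij_betw_byWitness[where f' = "\<lambda>q. q(Suc k := d)"])
    show "\<forall>p\<in>?S. (restrict p {..k})(Suc k := d) = p"
      by (auto simp: walks_def PiE_iff extensional_def fun_eq_iff)
    show "\<forall>q\<in>?T. restrict (q(Suc k := d)) {..k} = q"
      by (auto simp: walks_def PiE_iff extensional_def fun_eq_iff)
    show "(\<lambda>p. restrict p {..k}) ` ?S \<subseteq> ?T"
      by (auto simp: walks_def PiE_iff)
    show "(\<lambda>q. q(Suc k := d)) ` ?T \<subseteq> ?S"
      using d by (auto simp: walks_def PiE_iff extensional_def less_Suc_eq)
  qed
  then have "(\<Sum>p\<in>?S. \<Prod>i\<in>{1..k}. x (restrict p {..k} i)) = (\<Sum>q\<in>?T. \<Prod>i\<in>{1..k}. x (q i))"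
    by (rule sum.reindex_bij_betw)
  then have "(\<Sum>p\<in>?S. \<Prod>i\<in>{1..k}. x (p i)) = walk_sum_from n x k c - walk_sum n x k c d"
    by (simp add: walk_sum_from_minus_walk_sum)
  moreover have "walk_sum n x (Suc k) c d = (\<Sum>p\<in>?S. (\<Prod>i\<in>{1..k}. x (p i)) * x d)"
    unfolding walk_sum_def by (rule sum.cong) auto
  ultimately show ?thesis by (simp only: sum_distrib_right[symmetric])
qed

lemma walk_sum_1: "c < n \<Longrightarrow> d < n \<Longrightarrow> walk_sum n x (Suc 0) c d = (if c = d then 0 else x d)"
  using walk_sum_Suc[of d n x 0 c] by (auto simp: walk_sum_from_0 walk_sum_0)

lemma walk_sum_add: "walk_sum n x (k + l) c d = (\<Sum>e<n. walk_sum n x k c e * walk_sum n x l e d)"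
proof (induction l arbitrary: d)
  case 0
  show ?case
    by (cases "d < n") (simp_all add: walk_sum_0 walk_sum_eq_0 if_distrib cong: if_cong)
next
  case (Suc l)
  show ?case
  proof (cases "d < n")
    case True
    have "walk_sum_from n x (k + l) c = (\<Sum>e<n. walk_sum n x k c e * walk_sum_from n x l e)"
      unfolding walk_sum_from_def Suc.IH by (simp add: sum_distrib_left) (rule sum.swap)
    then show ?thesis
      using True
      by (simp add: walk_sum_Suc Suc.IH sum_subtractf[symmetric] sum_distrib_left sum_distrib_right algebra_simps)
  next
    case False
    then show ?thesis by (simp add: walk_sum_eq_0)
  qed
qed

lemma walk_sum_from_add:
  "walk_sum_from n x (k + l) c = (\<Sum>e<n. walk_sum n x k c e * walk_sum_from n x l e)"
  unfolding walk_sum_from_def walk_sum_add by (simp add: sum_distrib_left) (rule sum.swap)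

lemma walk_sum_Suc_left:
  assumes c: "c < n"
  shows "walk_sum n x (Suc k) c d = (\<Sum>e<n. x e * walk_sum n x k e d) - x c * walk_sum n x k c d"
proof -
  have "walk_sum n x (Suc k) c d = (\<Sum>e<n. walk_sum n x (Suc 0) c e * walk_sum n x k e d)"
    using walk_sum_add[of n x "Suc 0" k c d] by simp
  also have "\<dots> = (\<Sum>e<n. if e = c then 0 else x e * walk_sum n x k e d)"
    by (rule sum.cong) (auto simp: walk_sum_1 c)
  also have "\<dots> = (\<Sum>e<n. x e * walk_sum n x k e d) - x c * walk_sum n x k c d"
    using c by (simp add: sum.delta_remove sum_diff1)
  finally show ?thesis .
qed

lemma walk_sum_from_Suc:
  assumes "c < n"
  shows "walk_sum_from n x (Suc k) c = (\<Sum>e<n. x e * walk_sum_from n x k e) - x c * walk_sum_from n x k c"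
  unfolding walk_sum_from_def using assms
  by (simp add: walk_sum_Suc_left sum_subtractf sum_distrib_left) (rule sum.swap)

lemma walk_sum_sym: "x c * walk_sum n x k c d = x d * walk_sum n x k d c"
proof (induction k arbitrary: c d)
  case 0
  then show ?case by (auto simp: walk_sum_0)
next
  case (Suc k)
  show ?case
  proof (cases "c < n \<and> d < n")
    case True
    then have "x d * walk_sum n x (Suc k) d c
        = x d * ((\<Sum>e<n. x c * walk_sum n x k c e) - x c * walk_sum n x k c d)"
      using Suc.IH by (simp add: walk_sum_Suc_left)
    also have "\<dots> = x c * walk_sum n x (Suc k) c d"
      using True by (simp add: walk_sum_Suc walk_sum_from_def sum_distrib_left algebra_simps)
    finally show ?thesis by simp
  next
    case False
    then show ?thesis by (auto simp: walk_sum_eq_0)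
  qed
qed

definition walk_form :: "nat \<Rightarrow> (nat \<Rightarrow> real) \<Rightarrow> nat \<Rightarrow> (nat \<Rightarrow> real) \<Rightarrow> (nat \<Rightarrow> real) \<Rightarrow> real" where
  "walk_form n x k \<phi> \<psi> = (\<Sum>c<n. \<Sum>d<n. x c * \<phi> c * walk_sum n x k c d * \<psi> d)"

lemma walk_form_sym: "walk_form n x k \<phi> \<psi> = walk_form n x k \<psi> \<phi>"
proof -
  have swap: "x c * \<phi> c * walk_sum n x k c d * \<psi> d = x d * \<psi> d * walk_sum n x k d c * \<phi> c" for c d
  proof -
    have "x c * \<phi> c * walk_sum n x k c d * \<psi> d = (x c * walk_sum n x k c d) * (\<phi> c * \<psi> d)"
      by (simp add: ac_simps)
    also have "\<dots> = (x d * walk_sum n x k d c) * (\<phi> c * \<psi> d)"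
      by (simp only: walk_sum_sym)
    finally show ?thesis by (simp add: ac_simps)
  qed
  show ?thesis
    unfolding walk_form_def swap by (rule sum.swap)
qed

lemma walk_form_walk_sum_from:
  "walk_form n x k \<phi> (walk_sum_from n x l) = walk_form n x (k + l) \<phi> (\<lambda>_. 1)"
proof -
  have "walk_form n x (k + l) \<phi> (\<lambda>_. 1) = (\<Sum>c<n. x c * \<phi> c * walk_sum_from n x (k + l) c)"
    by (simp add: walk_form_def walk_sum_from_def sum_distrib_left)
  also have "\<dots> = walk_form n x k \<phi> (walk_sum_from n x l)"
    by (simp add: walk_form_def walk_sum_from_add sum_distrib_left mult.assoc)
  finally show ?thesis ..
qed

lemma walk_form_cong: "(\<And>d. d < n \<Longrightarrow> \<psi> d = \<psi>' d) \<Longrightarrow> walk_form n x k \<phi> \<psi> = walk_form n x k \<phi> \<psi>'"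
  by (simp add: walk_form_def)

lemma walk_form_diff: "walk_form n x k \<phi> (\<lambda>d. \<psi> d - \<chi> d) = walk_form n x k \<phi> \<psi> - walk_form n x k \<phi> \<chi>"
  by (simp add: walk_form_def right_diff_distrib sum_subtractf)

lemma walk_form_cmult: "walk_form n x k \<phi> (\<lambda>d. a * \<psi> d) = a * walk_form n x k \<phi> \<psi>"
  by (simp add: walk_form_def sum_distrib_left ac_simps)

lemma walk_form_sum: "walk_form n x k \<phi> (\<lambda>d. \<Sum>l\<in>L. \<chi> l d) = (\<Sum>l\<in>L. walk_form n x k \<phi> (\<chi> l))"
  unfolding walk_form_def sum_distrib_left by (subst (2) sum.swap) (simp add: sum.swap[of _ _ L])

definition path_graph :: "nat \<Rightarrow> nat graph" where
  "path_graph k = ({..k}, {{i, Suc i} | i. i < k})"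

lemma verts_path_graph [simp]: "verts (path_graph k) = {..k}"
  by (simp add: path_graph_def)

lemma edges_path_graph: "edges (path_graph k) = {{i, Suc i} | i. i < k}"
  by (simp add: path_graph_def)

lemma edges_path_graph_image: "edges (path_graph k) = (\<lambda>i. {i, Suc i}) ` {..<k}"
  by (auto simp: edges_path_graph)

lemma simple_graph_path_graph: "simple_graph (path_graph k)"
proof -
  have "\<exists>a b. a \<noteq> b \<and> a \<le> k \<and> b \<le> k \<and> {i, Suc i} = {a, b}" if "i < k" for i
    using that by (intro exI[of _ i] exI[of _ "Suc i"]) simp
  then show ?thesis by (auto simp: simple_graph_def edges_path_graph)
qed

lemma proper_colorings_path_graph: "proper_colorings (path_graph k) n = walks n k"
proof -
  have "(\<forall>a b. {a, b} \<in> {{i, Suc i} | i. i < k} \<longrightarrow> a \<noteq> b \<longrightarrow> p a \<noteq> p b) \<longleftrightarrow> (\<forall>i<k. p i \<noteq> p (Suc i))"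
    for p :: "nat \<Rightarrow> nat"
    by (auto simp: doubleton_eq_iff) (metis n_not_Suc_n)
  then show ?thesis
    unfolding proper_colorings_def walks_def path_graph_def by simp
qed

lemma prod_pinned_at_0:
  fixes k :: nat and x :: "nat \<Rightarrow> real"
  shows "(\<Prod>i\<in>{..k}. ((\<lambda>_. x)(0 := indicator {c})) i (p i)) = (if p 0 = c then \<Prod>i\<in>{1..k}. x (p i) else 0)"
proof -
  have "{..k} = insert 0 {1..k}" by auto
  moreover have "(\<Prod>i\<in>{1..k}. ((\<lambda>_. x)(0 := indicator {c})) i (p i)) = (\<Prod>i\<in>{1..k}. x (p i))"
    by (rule prod.cong) auto
  ultimately show ?thesis by (simp add: indicator_def)
qed

lemma rooted_csf_path_graph: "rooted_csf (path_graph k) 0 n x c = walk_sum_from n x k c"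
  unfolding rooted_csf_def weighted_csf_def walk_sum_from_eq proper_colorings_path_graph
    sum.inter_filter[OF finite_walks] verts_path_graph prod_pinned_at_0 ..

lemma walk_sum_eq_weighted_csf_path_graph:
  assumes "0 < k"
  shows "x d * weighted_csf (path_graph k) n ((\<lambda>_. x)(0 := indicator {c}, k := indicator {d}))
       = walk_sum n x k c d"
proof -
  have split: "{..k} = insert 0 (insert k {1..<k})" "{1..k} = insert k {1..<k}" using assms by auto
  have "x d * (\<Prod>i\<in>{..k}. ((\<lambda>_. x)(0 := indicator {c}, k := indicator {d})) i (p i))
      = (if p 0 = c \<and> p k = d then \<Prod>i\<in>{1..k}. x (p i) else 0)" for p
  proof -
    have "(\<Prod>i\<in>{1..<k}. ((\<lambda>_. x)(0 := indicator {c}, k := indicator {d})) i (p i))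
        = (\<Prod>i\<in>{1..<k}. x (p i))"
      by (rule prod.cong) auto
    then show ?thesis unfolding split using assms by (auto simp: indicator_def)
  qed
  then show ?thesis
    unfolding weighted_csf_def walk_sum_def proper_colorings_path_graph sum_distrib_left
      sum.inter_filter[OF finite_walks] verts_path_graph
    by presburger
qed

lemma Pk_eq_Un:
  assumes G: "simple_graph G" and H: "simple_graph H" and u: "u \<in> verts G" and w: "w \<in> verts H"
  shows "Pk k G u H w =
    (Pk_vG k u w ` verts G \<union> Pk_path k u w ` {..k} \<union> (\<lambda>b. Inl (Inr b)) ` verts H,
     (`) (Pk_vG k u w) ` edges G \<union> (`) (Pk_path k u w) ` edges (path_graph k)
       \<union> (`) (\<lambda>b. Inl (Inr b)) ` edges H)"
proof -
  have "Pk_path k u w ` {..k} \<subseteq> Pk_vG k u w ` verts G \<union> Inr ` {1..<k} \<union> (\<lambda>b. Inl (Inr b)) ` verts H"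
    using u w by (auto simp: Pk_path_def)
  moreover have "Inr ` {1..<k} \<subseteq> Pk_path k u w ` {..k}"
    by (force simp: Pk_path_def)
  ultimately have V: "Pk_vG k u w ` verts G \<union> (\<lambda>b. Inl (Inr b)) ` verts H \<union> Inr ` {1..<k}
      = Pk_vG k u w ` verts G \<union> Pk_path k u w ` {..k} \<union> (\<lambda>b. Inl (Inr b)) ` verts H"
    by blast
  have EP: "{{Pk_path k u w i, Pk_path k u w (i + 1)} | i. i < k} = (`) (Pk_path k u w) ` edges (path_graph k)"
    unfolding edges_path_graph_image image_image by auto
  have EG: "{{Pk_vG k u w a, Pk_vG k u w a'} | a a'. {a, a'} \<in> edges G} = (`) (Pk_vG k u w) ` edges G"
    using simple_graph_edges[OF G] by (intro doubletons_image) blast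
  have EH: "{{Inl (Inr b), Inl (Inr b')} | b b'. {b, b'} \<in> edges H} = (`) (\<lambda>b. Inl (Inr b)) ` edges H"
    using simple_graph_edges[OF H] by (intro doubletons_image[where f = "\<lambda>b. Inl (Inr b)"]) blast
  show ?thesis
    unfolding Pk_def V EP EG EH by (simp only: Un_ac)
qed

lemma Pk_verts_Int_H:
  assumes "w \<in> verts H"
  shows "(Pk_vG k u w ` verts G \<union> Pk_path k u w ` {..k}) \<inter> (\<lambda>b. Inl (Inr b)) ` verts H = {Inl (Inr w)}"
proof
  have "Pk_path k u w k = Inl (Inr w)"
    by (simp add: Pk_path_def Pk_vG_def)
  then show "{Inl (Inr w)} \<subseteq> (Pk_vG k u w ` verts G \<union> Pk_path k u w ` {..k}) \<inter> (\<lambda>b. Inl (Inr b)) ` verts H"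
    using assms by force
  show "(Pk_vG k u w ` verts G \<union> Pk_path k u w ` {..k}) \<inter> (\<lambda>b. Inl (Inr b)) ` verts H \<subseteq> {Inl (Inr w)}"
  proof
    fix y assume y: "y \<in> (Pk_vG k u w ` verts G \<union> Pk_path k u w ` {..k}) \<inter> (\<lambda>b. Inl (Inr b)) ` verts H"
    then obtain b where b: "y = Inl (Inr b)" by blast
    from y consider a where "y = Pk_vG k u w a" | i where "y = Pk_path k u w i" by blast
    then show "y \<in> {Inl (Inr w)}"
      by cases (use b in \<open>auto simp: Pk_vG_def Pk_path_def split: if_splits\<close>)
  qed
qed

lemma Pk_verts_Int_path:
  assumes "u \<in> verts G"
  shows "Pk_vG k u w ` verts G \<inter> Pk_path k u w ` {..k} = {Pk_vG k u w u}"
proof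
  have "Pk_path k u w 0 = Pk_vG k u w u"
    by (simp add: Pk_path_def)
  then show "{Pk_vG k u w u} \<subseteq> Pk_vG k u w ` verts G \<inter> Pk_path k u w ` {..k}"
    using assms by force
  show "Pk_vG k u w ` verts G \<inter> Pk_path k u w ` {..k} \<subseteq> {Pk_vG k u w u}"
  proof
    fix y assume "y \<in> Pk_vG k u w ` verts G \<inter> Pk_path k u w ` {..k}"
    then obtain a i where "y = Pk_vG k u w a" "y = Pk_path k u w i" by blast
    then show "y \<in> {Pk_vG k u w u}"
      by (auto simp: Pk_vG_def Pk_path_def split: if_splits)
  qed
qed

lemma inj_Pk_vG: "inj (Pk_vG k u w)"
  by (auto simp: inj_def Pk_vG_def split: if_splits)

lemma inj_on_Pk_path: "inj_on (Pk_path k u w) {..k}"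
  by (auto simp: inj_on_def Pk_path_def Pk_vG_def split: if_splits)

lemma weighted_csf_Pk_summand:
  assumes G: "simple_graph G" and u: "u \<in> verts G" and c: "c < n"
  shows "x d * (((\<lambda>_. x)(Inl (Inr w) := indicator {d})) (Pk_vG k u w u) c
      * weighted_csf (Pk_vG k u w ` verts G, (`) (Pk_vG k u w) ` edges G) n
          ((\<lambda>_. x)(Inl (Inr w) := indicator {d}, Pk_vG k u w u := indicator {c}))
      * weighted_csf (Pk_path k u w ` {..k}, (`) (Pk_path k u w) ` edges (path_graph k)) n
          ((\<lambda>_. x)(Inl (Inr w) := indicator {d}, Pk_vG k u w u := indicator {c})))
    = x c * rooted_csf G u n x c * walk_sum n x k c d"
proof -
  let ?F = "(\<lambda>_. x)(Inl (Inr w) := indicator {d}, Pk_vG k u w u := indicator {c})"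
  have "weighted_csf (Pk_vG k u w ` verts G, (`) (Pk_vG k u w) ` edges G) n ?F
      = weighted_csf (verts G, edges G) n (\<lambda>a. ?F (Pk_vG k u w a))"
    by (rule weighted_csf_image[OF inj_on_subset[OF inj_Pk_vG subset_UNIV] simple_graph_edges[OF G]])
  also have "(\<lambda>a. ?F (Pk_vG k u w a)) = (\<lambda>_. x)(u := indicator {c})"
    by (auto simp: fun_eq_iff Pk_vG_def)
  finally have Gpart: "weighted_csf (Pk_vG k u w ` verts G, (`) (Pk_vG k u w) ` edges G) n ?F
      = rooted_csf G u n x c"
    by (simp only: rooted_csf_def verts_edges_eq)
  have "weighted_csf (Pk_path k u w ` {..k}, (`) (Pk_path k u w) ` edges (path_graph k)) n ?F
      = weighted_csf (path_graph k) n (\<lambda>i. ?F (Pk_path k u w i))"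
    using inj_on_Pk_path simple_graph_edges[OF simple_graph_path_graph, of k]
    by (subst weighted_csf_image) (auto simp: path_graph_def)
  moreover have "x d * ((\<lambda>_. x)(Inl (Inr w) := indicator {d})) (Pk_vG k u w u) c
       * weighted_csf (path_graph k) n (\<lambda>i. ?F (Pk_path k u w i)) = x c * walk_sum n x k c d"
  proof (cases "k = 0")
    case True
    \<comment> \<open>the two roots coincide, and the pin at the root of \<open>G\<close> overrides the one of \<open>H\<close>\<close>
    have "weighted_csf (path_graph k) n (\<lambda>i. ?F (Pk_path k u w i)) = rooted_csf (path_graph k) 0 n x c"
      unfolding rooted_csf_def by (intro weighted_csf_cong) (simp add: Pk_path_def True)
    then show ?thesis
      using True c by (simp add: rooted_csf_path_graph walk_sum_from_0 walk_sum_0 Pk_vG_def indicator_def)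
  next
    case False
    have "weighted_csf (path_graph k) n (\<lambda>i. ?F (Pk_path k u w i))
        = weighted_csf (path_graph k) n ((\<lambda>_. x)(0 := indicator {c}, k := indicator {d}))"
      using False by (intro weighted_csf_cong) (auto simp: Pk_path_def Pk_vG_def)
    then show ?thesis
      using False walk_sum_eq_weighted_csf_path_graph[of k x d n c] by (simp add: Pk_vG_def)
  qed
  ultimately show ?thesis using Gpart by (simp add: ac_simps)
qed

lemma weighted_csf_Pk_G_path:
  assumes G: "simple_graph G" and u: "u \<in> verts G"
  shows "x d * weighted_csf (Pk_vG k u w ` verts G \<union> Pk_path k u w ` {..k},
              (`) (Pk_vG k u w) ` edges G \<union> (`) (Pk_path k u w) ` edges (path_graph k)) n
              ((\<lambda>_. x)(Inl (Inr w) := indicator {d}))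
       = (\<Sum>c<n. x c * rooted_csf G u n x c * walk_sum n x k c d)"
proof -
  note E1 = image_edges_subset[OF simple_graph_edges_subset[OF G], of "Pk_vG k u w"]
  note E2 = image_edges_subset[OF simple_graph_edges_subset[OF simple_graph_path_graph, of k],
    of "Pk_path k u w", unfolded verts_path_graph]
  have "weighted_csf (Pk_vG k u w ` verts G \<union> Pk_path k u w ` {..k},
              (`) (Pk_vG k u w) ` edges G \<union> (`) (Pk_path k u w) ` edges (path_graph k)) n
              ((\<lambda>_. x)(Inl (Inr w) := indicator {d}))
     = (\<Sum>c<n. ((\<lambda>_. x)(Inl (Inr w) := indicator {d})) (Pk_vG k u w u) c
        * weighted_csf (Pk_vG k u w ` verts G, (`) (Pk_vG k u w) ` edges G) n
            ((\<lambda>_. x)(Inl (Inr w) := indicator {d}, Pk_vG k u w u := indicator {c}))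
        * weighted_csf (Pk_path k u w ` {..k}, (`) (Pk_path k u w) ` edges (path_graph k)) n
            ((\<lambda>_. x)(Inl (Inr w) := indicator {d}, Pk_vG k u w u := indicator {c})))"
    (is "?lhs = (\<Sum>c<n. ?S c)")
    using simple_graph_finite[OF G]
    by (intro weighted_csf_glue[OF _ _ Pk_verts_Int_path[OF u] E1 E2]) simp_all
  then have "x d * ?lhs = (\<Sum>c<n. x d * ?S c)"
    by (simp only: sum_distrib_left)
  also have "\<dots> = (\<Sum>c<n. x c * rooted_csf G u n x c * walk_sum n x k c d)"
    by (intro sum.cong refl weighted_csf_Pk_summand[OF G u]) simp
  finally show ?thesis .
qed

lemma CSF_Pk:
  assumes G: "simple_graph G" and H: "simple_graph H" and u: "u \<in> verts G" and w: "w \<in> verts H"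
  shows "CSF (Pk k G u H w) n x = walk_form n x k (rooted_csf G u n x) (rooted_csf H w n x)"
proof -
  let ?VG = "Pk_vG k u w ` verts G \<union> Pk_path k u w ` {..k}"
  let ?EG = "(`) (Pk_vG k u w) ` edges G \<union> (`) (Pk_path k u w) ` edges (path_graph k)"
  let ?h = "\<lambda>b. Inl (Inr b) :: ('a + 'b) + nat"
  have root_H: "weighted_csf (?h ` verts H, (`) ?h ` edges H) n ((\<lambda>_. x)(Inl (Inr w) := indicator {d}))
      = rooted_csf H w n x d" for d
  proof -
    have "(\<lambda>b. ((\<lambda>_. x)(Inl (Inr w) := indicator {d})) (?h b)) = (\<lambda>_. x)(w := indicator {d})"
      by (auto simp: fun_eq_iff)
    then show ?thesis
      using weighted_csf_image[of ?h "verts H" "edges H" n] simple_graph_edges[OF H]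
      by (simp add: inj_on_def rooted_csf_def)
  qed
  note E1 = Un_edges_subset[OF image_edges_subset[OF simple_graph_edges_subset[OF G]]
    image_edges_subset[OF simple_graph_edges_subset[OF simple_graph_path_graph], unfolded verts_path_graph],
    of "Pk_vG k u w" "Pk_path k u w" k]
  note E2 = image_edges_subset[OF simple_graph_edges_subset[OF H], of ?h]
  have "CSF (Pk k G u H w) n x = (\<Sum>d<n. x d
      * weighted_csf (?VG, ?EG) n ((\<lambda>_. x)(Inl (Inr w) := indicator {d}))
      * weighted_csf (?h ` verts H, (`) ?h ` edges H) n ((\<lambda>_. x)(Inl (Inr w) := indicator {d})))"
    unfolding CSF_eq_weighted_csf Pk_eq_Un[OF assms]
    using simple_graph_finite[OF G] simple_graph_finite[OF H]
    by (intro weighted_csf_glue[OF _ _ Pk_verts_Int_H[OF w] E1 E2]) simp_all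
  also have "\<dots> = (\<Sum>d<n. (\<Sum>c<n. x c * rooted_csf G u n x c * walk_sum n x k c d) * rooted_csf H w n x d)"
    by (simp only: weighted_csf_Pk_G_path[OF G u] root_H)
  also have "\<dots> = walk_form n x k (rooted_csf G u n x) (rooted_csf H w n x)"
    unfolding walk_form_def sum_distrib_right by (rule sum.swap)
  finally show ?thesis .
qed

lemma K1_eq_path_graph: "K1 = path_graph 0"
  by (simp add: K1_def path_graph_def)

lemma CSF_tailed:
  assumes "simple_graph H" "v \<in> verts H"
  shows "CSF (tailed H v m) n x = walk_form n x m (rooted_csf H v n x) (\<lambda>_. 1)"
  unfolding tailed_def K1_eq_path_graph
  using CSF_Pk[OF assms(1) simple_graph_path_graph assms(2), where w = 0 and k = m]
  by (simp add: rooted_csf_path_graph walk_sum_from_0 cong: walk_form_cong)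

lemma verts_cycle_graph [simp]: "verts (cycle_graph g) = {..<g}"
  by (simp add: cycle_graph_def)

lemma cycle_graph_eq_path_graph:
  assumes "2 \<le> g"
  shows "cycle_graph g = ({..g - 1}, insert {g - 1, 0} (edges (path_graph (g - 1))))"
proof -
  have "{{i, (i + 1) mod g} | i. i < g} = insert {g - 1, 0} {{i, Suc i} | i. i < g - 1}"
  proof (intro set_eqI iffI)
    fix e assume "e \<in> {{i, (i + 1) mod g} | i. i < g}"
    then obtain i where "i < g" "e = {i, (i + 1) mod g}" by blast
    then show "e \<in> insert {g - 1, 0} {{i, Suc i} | i. i < g - 1}"
      by (cases "i = g - 1") auto
  next
    fix e assume "e \<in> insert {g - 1, 0} {{i, Suc i} | i. i < g - 1}"
    then consider "e = {g - 1, (g - 1 + 1) mod g}" | i where "i < g - 1" "e = {i, (i + 1) mod g}"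
      using assms by auto
    then show "e \<in> {{i, (i + 1) mod g} | i. i < g}"
      by cases (use assms in auto)
  qed
  moreover have "{..<g} = {..g - 1}" using assms by auto
  ultimately show ?thesis by (simp add: cycle_graph_def edges_path_graph)
qed

lemma simple_graph_cycle_graph:
  assumes "2 \<le> g"
  shows "simple_graph (cycle_graph g)"
proof -
  have "\<exists>a b. a \<noteq> b \<and> a \<le> g - 1 \<and> b \<le> g - 1 \<and> {g - 1, 0} = {a, b}"
    using assms by (intro exI[of _ "g - 1"] exI[of _ 0]) auto
  then show ?thesis
    using simple_graph_path_graph[of "g - 1"] cycle_graph_eq_path_graph[OF assms]
    by (simp add: simple_graph_def)
qed

lemma proper_colorings_cycle_graph:
  "2 \<le> g \<Longrightarrow> proper_colorings (cycle_graph g) n = {p \<in> walks n (g - 1). p (g - 1) \<noteq> p 0}"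
  using proper_colorings_path_graph[of "g - 1" n]
  by (simp add: cycle_graph_eq_path_graph proper_colorings_insert_edge path_graph_def)

lemma rooted_csf_cycle_graph:
  assumes "2 \<le> g"
  shows "rooted_csf (cycle_graph g) 0 n x c = walk_sum_from n x (g - 1) c - walk_sum n x (g - 1) c c"
proof -
  have "{..<g} = {..g - 1}" using assms by auto
  then have "rooted_csf (cycle_graph g) 0 n x c
      = (\<Sum>p\<in>{p \<in> walks n (g - 1). p (g - 1) \<noteq> p 0}. if p 0 = c then \<Prod>i\<in>{1..g - 1}. x (p i) else 0)"
    unfolding rooted_csf_def weighted_csf_def proper_colorings_cycle_graph[OF assms]
    by (simp only: verts_cycle_graph prod_pinned_at_0)
  also have "\<dots> = (\<Sum>p\<in>{p \<in> walks n (g - 1). p 0 = c \<and> p (g - 1) \<noteq> c}. \<Prod>i\<in>{1..g - 1}. x (p i))"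
    by (simp add: sum.inter_filter) (rule sum.cong, auto)
  finally show ?thesis by (simp add: walk_sum_from_minus_walk_sum)
qed

lemma rooted_csf_cycle_graph_Suc:
  assumes "2 \<le> g" "c < n"
  shows "rooted_csf (cycle_graph (Suc g)) 0 n x c = walk_sum_from n x g c - x c * rooted_csf (cycle_graph g) 0 n x c"
proof -
  have "walk_sum n x g c c = x c * rooted_csf (cycle_graph g) 0 n x c"
    using walk_sum_Suc[OF assms(2), of x "g - 1" c] assms(1)
    by (simp add: rooted_csf_cycle_graph[OF assms(1)])
  then show ?thesis
    using assms(1) by (simp add: rooted_csf_cycle_graph)
qed

lemma rooted_csf_cycle_graph_expansion_Suc_Suc:
  "c < n \<Longrightarrow> rooted_csf (cycle_graph (Suc (Suc m))) 0 n x c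
     = real (Suc m) * walk_sum_from n x (Suc m) c
       - (\<Sum>j<m. CSF (cycle_graph (Suc m - j)) n x * walk_sum_from n x j c)"
proof (induction m arbitrary: c)
  case 0
  then show ?case
    by (simp add: rooted_csf_cycle_graph walk_sum_1)
next
  case (Suc m)
  let ?P = "walk_sum_from n x" and ?X = "\<lambda>g. CSF (cycle_graph g) n x"
  let ?r = "\<lambda>g. rooted_csf (cycle_graph g) 0 n x"
  let ?S = "\<lambda>j. \<Sum>a<n. x a * ?P j a"
  let ?T = "\<lambda>f. \<Sum>j<m. ?X (Suc m - j) * f j"
  have xP: "x c * ?P j c = ?S j - ?P (Suc j) c" for j
    using walk_sum_from_Suc[OF Suc.prems] by simp
  have "?X (Suc (Suc m)) = (\<Sum>a<n. x a * ?r (Suc (Suc m)) a)"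
    by (rule CSF_eq_sum_rooted_csf) simp_all
  also have "\<dots> = (\<Sum>a<n. x a * (real (Suc m) * ?P (Suc m) a - ?T (\<lambda>j. ?P j a)))"
    by (intro sum.cong refl) (simp add: Suc.IH)
  also have "\<dots> = real (Suc m) * ?S (Suc m) - ?T ?S"
    by (simp add: sum_subtractf sum_distrib_left algebra_simps) (rule sum.swap)
  finally have X: "?X (Suc (Suc m)) = real (Suc m) * ?S (Suc m) - ?T ?S" .
  have "?r (Suc (Suc (Suc m))) c = ?P (Suc (Suc m)) c - x c * ?r (Suc (Suc m)) c"
    using rooted_csf_cycle_graph_Suc[OF _ Suc.prems] by simp
  also have "\<dots> = ?P (Suc (Suc m)) c - real (Suc m) * (x c * ?P (Suc m) c) + ?T (\<lambda>j. x c * ?P j c)"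
    by (simp add: Suc.IH[OF Suc.prems] sum_distrib_left algebra_simps)
  also have "\<dots> = real (Suc (Suc m)) * ?P (Suc (Suc m)) c
      - (real (Suc m) * ?S (Suc m) - ?T ?S) - ?T (\<lambda>j. ?P (Suc j) c)"
    by (simp add: xP sum_subtractf algebra_simps)
  also have "\<dots> = real (Suc (Suc m)) * ?P (Suc (Suc m)) c
      - (\<Sum>j<Suc m. ?X (Suc (Suc m) - j) * ?P j c)"
    unfolding X[symmetric] sum.lessThan_Suc_shift using Suc.prems by (simp add: walk_sum_from_0)
  finally show ?case .
qed

lemma rooted_csf_cycle_graph_expansion:
  assumes "2 \<le> g" "c < n"
  shows "rooted_csf (cycle_graph g) 0 n x c
     = real (g - 1) * walk_sum_from n x (g - 1) c
       - (\<Sum>l = 1..g - 2. CSF (cycle_graph (g - l)) n x * walk_sum_from n x (l - 1) c)"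
proof -
  obtain m where "g = Suc (Suc m)"
    using assms(1) by (metis add_2_eq_Suc le_Suc_ex)
  then show ?thesis
    using rooted_csf_cycle_graph_expansion_Suc_Suc[OF assms(2), of m x]
    by (simp add: sum.atLeast1_atMost_eq)
qed

theorem proposition3p2:
  fixes H :: "'a graph" and v :: 'a and k g n :: nat and x :: "nat \<Rightarrow> real"
  assumes "simple_graph H" and "v \<in> verts H" and "g \<ge> 2"
  shows "CSF (Pk k (cycle_graph g) 0 H v) n x =
           of_nat (g - 1) * CSF (tailed H v (k + g - 1)) n x
           - (\<Sum>l = 1..g - 2. CSF (cycle_graph (g - l)) n x * CSF (tailed H v (k + l - 1)) n x)"
proof -
  let ?r = "rooted_csf H v n x" and ?P = "walk_sum_from n x" and ?X = "\<lambda>g. CSF (cycle_graph g) n x"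
  have "CSF (Pk k (cycle_graph g) 0 H v) n x = walk_form n x k ?r (rooted_csf (cycle_graph g) 0 n x)"
    using CSF_Pk[OF simple_graph_cycle_graph[OF assms(3)] assms(1) _ assms(2)] assms(3)
    by (simp add: walk_form_sym)
  also have "\<dots> = walk_form n x k ?r (\<lambda>c. real (g - 1) * ?P (g - 1) c - (\<Sum>l = 1..g - 2. ?X (g - l) * ?P (l - 1) c))"
    using rooted_csf_cycle_graph_expansion[OF assms(3)] by (rule walk_form_cong)
  also have "\<dots> = real (g - 1) * walk_form n x k ?r (?P (g - 1))
      - (\<Sum>l = 1..g - 2. ?X (g - l) * walk_form n x k ?r (?P (l - 1)))"
    by (simp add: walk_form_diff walk_form_cmult walk_form_sum)
  also have "\<dots> = of_nat (g - 1) * CSF (tailed H v (k + g - 1)) n x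
      - (\<Sum>l = 1..g - 2. ?X (g - l) * CSF (tailed H v (k + l - 1)) n x)"
    using assms(3) by (simp add: walk_form_walk_sum_from CSF_tailed[OF assms(1,2)])
  finally show ?thesis .
qed

end
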